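(* For every odd integer $k\ge 5$, the graph $F_1(k)$ is word-representable.
   Context: For odd $k\ge5$, $F_1(k)$ is the split graph with clique $C=\{c_1,\dots,c_{k-1}\}$ and independent set $I=\{b_1,b_2,a_1,\dots,a_{k-2}\}$, where $N(b_1)=\{c_1,\dots,c_{k-2}\}$, $N(b_2)=\{c_2,\dots,c_{k-1}\}$, and $N(a_i)=\{c_i,c_{i+1}\}$ for $1\le i\le k-2$. A graph $G=(V,E)$ is word-representable if there is a word $w$ over $V$ such that for all distinct $a,b\in V$, $ab\in E$ iff $a$ and $b$ alternate in $w$ (i.e. the subsequence of $w$ formed by all occurrences of $a$ and $b$ is $abab\cdots$ or $baba\cdots$). *)

theory Defs
  imports Main
begin

text \<open>Simple graphs given by a vertex set and an edge predicate (assumed symmetric).\<close>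

definition alternate_in :: "'a list \<Rightarrow> 'a \<Rightarrow> 'a \<Rightarrow> bool" where
  "alternate_in w a b \<longleftrightarrow>
     (let s = filter (\<lambda>x. x = a \<or> x = b) w
      in \<forall>i. Suc i < length s \<longrightarrow> s ! i \<noteq> s ! Suc i)"

definition word_represents :: "'a list \<Rightarrow> 'a set \<Rightarrow> ('a \<Rightarrow> 'a \<Rightarrow> bool) \<Rightarrow> bool" where
  "word_represents w V E \<longleftrightarrow> set w = V \<and>
     (\<forall>a\<in>V. \<forall>b\<in>V. a \<noteq> b \<longrightarrow> (E a b \<longleftrightarrow> alternate_in w a b))"

definition word_representable :: "'a set \<Rightarrow> ('a \<Rightarrow> 'a \<Rightarrow> bool) \<Rightarrow> bool" where
  "word_representable V E \<longleftrightarrow> (\<exists>w. word_represents w V E)"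

text \<open>Vertices of F_1(k): clique vertices c_i, independent vertices b_1, b_2, a_i.\<close>
datatype fvert = C nat | B1 | B2 | A nat

definition F1_vertices :: "nat \<Rightarrow> fvert set" where
  "F1_vertices k = C ` {1..k-1} \<union> {B1, B2} \<union> A ` {1..k-2}"

fun F1_adj :: "nat \<Rightarrow> fvert \<Rightarrow> fvert \<Rightarrow> bool" where
  "F1_adj k (C i) (C j) = (i \<noteq> j)"
| "F1_adj k B1 (C j) = (1 \<le> j \<and> j \<le> k - 2)"
| "F1_adj k (C j) B1 = (1 \<le> j \<and> j \<le> k - 2)"
| "F1_adj k B2 (C j) = (2 \<le> j \<and> j \<le> k - 1)"
| "F1_adj k (C j) B2 = (2 \<le> j \<and> j \<le> k - 1)"
| "F1_adj k (A i) (C j) = (j = i \<or> j = i + 1)"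
| "F1_adj k (C j) (A i) = (j = i \<or> j = i + 1)"
| "F1_adj k _ _ = False"

end

theory Submission
  imports Defs
begin

(* Write k = 2t + 3 and n = k - 2, and let B(i) = a_i c_i c_(i+1) a_i. The word

     B(1) B(3) ... B(2t-1)  a_n c_n b_1 c_(n+1) a_n c_1 b_2  B(2) B(4) ... B(2t)  c_(n+1) b_2 a_n

   represents F_1(k). Its clique letters read c_1 ... c_(k-1) c_1 ... c_(k-1), so any two of them
   alternate. Every c_l occurs exactly twice, so an independent letter x, occurring one to three
   times, alternates with c_l iff each gap between consecutive occurrences of x contains exactly
   one c_l (for a single occurrence: iff exactly one c_l precedes it); these gaps read off N(x).
   Any two independent letters fail to alternate because one of them repeats with no occurrence
   of the other in between. *)

lemma count_list_distinct: "distinct xs \<Longrightarrow> count_list xs x = (if x \<in> set xs then 1 else 0)"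
  by (induction xs) auto

lemma count_list_filter: "P x \<Longrightarrow> count_list (filter P xs) x = count_list xs x"
  by (induction xs) auto

lemma alternate_in_iff_distinct_adj:
  "alternate_in w a b \<longleftrightarrow> distinct_adj (filter (\<lambda>x. x = a \<or> x = b) w)"
  by (simp add: alternate_in_def Let_def distinct_adj_conv_nth)

lemma alternate_in_commute: "alternate_in w a b \<longleftrightarrow> alternate_in w b a"
  unfolding alternate_in_iff_distinct_adj by (simp add: disj_commute)

lemma alternate_in_filter:
  assumes "P a" "P b"
  shows "alternate_in (filter P w) a b \<longleftrightarrow> alternate_in w a b"
proof -
  have "(\<lambda>x. P x \<and> (x = a \<or> x = b)) = (\<lambda>x. x = a \<or> x = b)"
    using assms by blast
  then show ?thesis by (simp add: alternate_in_iff_distinct_adj conj_commute)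
qed

lemma alternate_in_append_self:
  assumes "distinct xs" "a \<in> set xs" "b \<in> set xs" "a \<noteq> b"
  shows "alternate_in (xs @ xs) a b"
proof -
  let ?s = "filter (\<lambda>x. x = a \<or> x = b) xs"
  have "distinct ?s" "set ?s = {a, b}" using assms by auto
  then have "length ?s = 2" using assms(4) by (metis distinct_card card_2_iff)
  then obtain x y where xy: "?s = [x, y]" by (auto simp: length_Suc_conv numeral_2_eq_2)
  with \<open>set ?s = {a, b}\<close> have "{x, y} = {a, b}" by simp
  with xy have "?s = [a, b] \<or> ?s = [b, a]" by (auto simp: doubleton_eq_iff)
  then show ?thesis using assms(4) by (auto simp: alternate_in_iff_distinct_adj)
qed

lemma filter_pair_eq_replicate:
  "a \<notin> set v \<Longrightarrow> filter (\<lambda>x. x = a \<or> x = b) v = replicate (count_list v b) b"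
  by (induction v) auto

lemma alternate_in_single_occurrence:
  assumes "a \<notin> set u" "a \<notin> set z" "b \<noteq> a" "count_list (u @ a # z) b = 2"
  shows "alternate_in (u @ a # z) a b \<longleftrightarrow> count_list u b = 1"
proof -
  have "count_list u b \<in> {0, 1, 2}" using assms(4) by auto
  then show ?thesis using assms
    by (auto simp: alternate_in_iff_distinct_adj filter_pair_eq_replicate distinct_adj_append_iff
        numeral_2_eq_2)
qed

lemma alternate_in_double_occurrence:
  assumes "a \<notin> set u" "a \<notin> set v" "a \<notin> set z" "b \<noteq> a"
    "count_list (u @ a # v @ a # z) b = 2"
  shows "alternate_in (u @ a # v @ a # z) a b \<longleftrightarrow> count_list v b = 1"
proof -
  have "count_list u b + count_list v b + count_list z b = 2" using assms by simp
  then have "count_list v b \<in> {0, 1, 2}" "count_list u b \<in> {0, 1, 2}" by auto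
  then show ?thesis using assms(1-4) \<open>_ + _ + _ = 2\<close>
    by (auto simp: alternate_in_iff_distinct_adj filter_pair_eq_replicate distinct_adj_append_iff
        numeral_2_eq_2)
qed

lemma alternate_in_triple_occurrence:
  assumes "a \<notin> set u" "a \<notin> set v" "a \<notin> set v'" "a \<notin> set z" "b \<noteq> a"
    "count_list (u @ a # v @ a # v' @ a # z) b = 2"
  shows "alternate_in (u @ a # v @ a # v' @ a # z) a b \<longleftrightarrow>
    count_list v b = 1 \<and> count_list v' b = 1"
proof -
  have "count_list u b + count_list v b + count_list v' b + count_list z b = 2" using assms by simp
  then have "count_list v b \<in> {0, 1, 2}" "count_list u b \<in> {0, 1, 2}" "count_list v' b \<in> {0, 1, 2}"
    by auto
  then show ?thesis using assms(1-5) \<open>_ + _ + _ + _ = 2\<close>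
    by (auto simp: alternate_in_iff_distinct_adj filter_pair_eq_replicate distinct_adj_append_iff
        numeral_2_eq_2)
qed

lemma not_alternate_in_repeated:
  assumes "a \<notin> set v" "b \<notin> set v"
  shows "\<not> alternate_in (u @ a # v @ a # z) a b"
proof -
  have "filter (\<lambda>x. x = a \<or> x = b) v = []" using assms by (auto simp: filter_empty_conv)
  then show ?thesis by (simp add: alternate_in_iff_distinct_adj distinct_adj_append_iff)
qed

fun is_C :: "fvert \<Rightarrow> bool" where
  "is_C (C _) = True"
| "is_C _ = False"

definition block :: "nat \<Rightarrow> fvert list" where
  "block i = [A i, C i, C (Suc i), A i]"

definition blocks :: "nat list \<Rightarrow> fvert list" where
  "blocks ns = concat (map block ns)"

definition odd_blocks :: "nat \<Rightarrow> fvert list" where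
  "odd_blocks t = blocks (map (\<lambda>j. 2*j+1) [0..<t])"

definition even_blocks :: "nat \<Rightarrow> fvert list" where
  "even_blocks t = blocks (map (\<lambda>j. 2*j+2) [0..<t])"

definition F1_word :: "nat \<Rightarrow> fvert list" where
  "F1_word t = odd_blocks t @ [A (2*t+1), C (2*t+1), B1, C (2*t+2), A (2*t+1), C 1, B2] @
     even_blocks t @ [C (2*t+2), B2, A (2*t+1)]"

lemma set_blocks: "set (blocks ns) = (\<Union>i\<in>set ns. {A i, C i, C (Suc i)})"
  by (auto simp: blocks_def block_def)

lemma filter_is_C_blocks:
  "filter is_C (blocks ns) = map C (concat (map (\<lambda>i. [i, Suc i]) ns))"
  by (induction ns) (auto simp: blocks_def block_def)

lemma count_list_blocks_C:
  "count_list (blocks ns) (C l) = count_list (concat (map (\<lambda>i. [i, Suc i]) ns)) l"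
  by (induction ns) (auto simp: blocks_def block_def)

lemma concat_pairs_arith_progression:
  "concat (map (\<lambda>i. [i, Suc i]) (map (\<lambda>j. 2*j+c) [0..<t])) = [c..<2*t+c]"
  by (induction t) auto

lemma blocks_split:
  assumes "distinct ns" "i \<in> set ns"
  obtains u z where "blocks ns = u @ block i @ z" "A i \<notin> set u" "A i \<notin> set z"
proof -
  obtain ms ms' where ns: "ns = ms @ i # ms'" using split_list[OF assms(2)] by blast
  with assms(1) have "i \<notin> set ms" "i \<notin> set ms'" by auto
  then have "A i \<notin> set (blocks ms)" "A i \<notin> set (blocks ms')" by (auto simp: set_blocks)
  moreover have "blocks ns = blocks ms @ block i @ blocks ms'" by (simp add: ns blocks_def)
  ultimately show thesis using that by blast
qed

lemma A_mem_odd_blocks: "A i \<in> set (odd_blocks t) \<longleftrightarrow> odd i \<and> i < 2*t"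
  by (auto simp: odd_blocks_def set_blocks elim!: oddE)

lemma A_mem_even_blocks: "A i \<in> set (even_blocks t) \<longleftrightarrow> even i \<and> 0 < i \<and> i \<le> 2*t"
proof -
  have "(\<exists>j<t. i = 2*j+2) \<longleftrightarrow> even i \<and> 0 < i \<and> i \<le> 2*t"
  proof
    assume "even i \<and> 0 < i \<and> i \<le> 2*t"
    then show "\<exists>j<t. i = 2*j+2" by (intro exI[of _ "i div 2 - 1"]) auto
  qed auto
  then show ?thesis by (auto simp: even_blocks_def set_blocks)
qed

lemma B_not_mem_odd_even_blocks:
  "B1 \<notin> set (odd_blocks t)" "B2 \<notin> set (odd_blocks t)"
  "B1 \<notin> set (even_blocks t)" "B2 \<notin> set (even_blocks t)"
  by (auto simp: odd_blocks_def even_blocks_def set_blocks)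

lemma count_list_odd_blocks_C: "count_list (odd_blocks t) (C l) = count_list [1..<2*t+1] l"
  using concat_pairs_arith_progression[of 1 t]
  by (simp add: odd_blocks_def count_list_blocks_C del: upt_Suc)

lemma count_list_even_blocks_C: "count_list (even_blocks t) (C l) = count_list [2..<2*t+2] l"
  using concat_pairs_arith_progression[of 2 t]
  by (simp add: even_blocks_def count_list_blocks_C del: upt_Suc)

lemma filter_is_C_F1_word:
  "filter is_C (F1_word t) = map C ([1..<2*t+3] @ [1..<2*t+3])"
proof -
  have odd: "[1..<2*t+3] = [1..<2*t+1] @ [2*t+1, 2*t+2]"
    by (simp add: numeral_3_eq_3)
  have even: "[1..<2*t+3] = [1] @ [2..<2*t+2] @ [2*t+2]"
    using upt_conv_Cons[of 1 "2*t+3"] upt_Suc_append[of 2 "2*t+2"]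
    by (simp add: numeral_3_eq_3 numeral_2_eq_2 del: upt_Suc)
  have "filter is_C (F1_word t) =
      map C ([1..<2*t+1] @ [2*t+1, 2*t+2]) @ map C ([1] @ [2..<2*t+2] @ [2*t+2])"
    using concat_pairs_arith_progression[of 1 t] concat_pairs_arith_progression[of 2 t]
    by (simp add: F1_word_def odd_blocks_def even_blocks_def filter_is_C_blocks del: upt_Suc)
  then show ?thesis by (simp only: odd[symmetric] even[symmetric] map_append)
qed

lemma count_list_F1_word_C:
  assumes "l \<in> {1..2*t+2}"
  shows "count_list (F1_word t) (C l) = 2"
proof -
  have "count_list (F1_word t) (C l) = count_list (filter is_C (F1_word t)) (C l)"
    by (simp add: count_list_filter)
  also have "\<dots> = count_list ([1..<2*t+3] @ [1..<2*t+3]) l"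
    by (simp add: filter_is_C_F1_word count_list_map_conv inj_def)
  also have "\<dots> = 2" using assms by (simp add: count_list_distinct)
  finally show ?thesis .
qed

lemma alternate_in_F1_word_C_C:
  assumes "i \<in> {1..2*t+2}" "j \<in> {1..2*t+2}" "i \<noteq> j"
  shows "alternate_in (F1_word t) (C i) (C j)"
proof -
  have "alternate_in (map C [1..<2*t+3] @ map C [1..<2*t+3]) (C i) (C j)"
    by (rule alternate_in_append_self) (use assms in \<open>auto simp: distinct_map inj_on_def\<close>)
  then show ?thesis
    using alternate_in_filter[of is_C "C i" "C j" "F1_word t"] by (simp add: filter_is_C_F1_word)
qed

lemma F1_word_split_block:
  assumes "i \<in> {1..2*t}"
  obtains u z where "F1_word t = u @ A i # [C i, C (Suc i)] @ A i # z" "A i \<notin> set u" "A i \<notin> set z"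
proof -
  let ?middle = "[A (2*t+1), C (2*t+1), B1, C (2*t+2), A (2*t+1), C 1, B2]"
  let ?tail = "[C (2*t+2), B2, A (2*t+1)]"
  have "A i \<notin> set ?middle" "A i \<notin> set ?tail" using assms by auto
  show thesis
  proof (cases "odd i")
    case True
    with assms have "i \<in> set (map (\<lambda>j. 2*j+1) [0..<t])" by (auto elim!: oddE)
    then obtain u z where split: "odd_blocks t = u @ block i @ z" "A i \<notin> set u" "A i \<notin> set z"
      unfolding odd_blocks_def by (rule blocks_split[rotated]) (auto simp: distinct_map inj_on_def)
    have "A i \<notin> set (even_blocks t)" using True by (simp add: A_mem_even_blocks)
    with split \<open>A i \<notin> set ?middle\<close> \<open>A i \<notin> set ?tail\<close> show thesis
      by (intro that[of u "z @ ?middle @ even_blocks t @ ?tail"]) (auto simp: F1_word_def block_def)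
  next
    case False
    with assms have "i = 2*(i div 2 - 1) + 2" "i div 2 - 1 < t" by auto
    then have "i \<in> set (map (\<lambda>j. 2*j+2) [0..<t])"
      by (simp only: set_map set_upt) (rule image_eqI, auto)
    then obtain u z where split: "even_blocks t = u @ block i @ z" "A i \<notin> set u" "A i \<notin> set z"
      unfolding even_blocks_def by (rule blocks_split[rotated]) (auto simp: distinct_map inj_on_def)
    have "A i \<notin> set (odd_blocks t)" using False by (simp add: A_mem_odd_blocks)
    with split \<open>A i \<notin> set ?middle\<close> \<open>A i \<notin> set ?tail\<close> show thesis
      by (intro that[of "odd_blocks t @ ?middle @ u" "z @ ?tail"]) (auto simp: F1_word_def block_def)
  qed
qed

lemma alternate_in_F1_word_A_C:
  assumes "i \<in> {1..2*t}" "l \<in> {1..2*t+2}"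
  shows "alternate_in (F1_word t) (A i) (C l) \<longleftrightarrow> l = i \<or> l = Suc i"
proof -
  obtain u z where w: "F1_word t = u @ A i # [C i, C (Suc i)] @ A i # z"
    and "A i \<notin> set u" "A i \<notin> set z"
    by (rule F1_word_split_block[OF assms(1)])
  have "alternate_in (F1_word t) (A i) (C l) \<longleftrightarrow> count_list [C i, C (Suc i)] (C l) = 1"
    unfolding w using \<open>A i \<notin> set u\<close> \<open>A i \<notin> set z\<close> count_list_F1_word_C[OF assms(2)]
    by (intro alternate_in_double_occurrence) (auto simp: w)
  then show ?thesis by auto
qed

lemma alternate_in_F1_word_top_A_C:
  assumes "l \<in> {1..2*t+2}"
  shows "alternate_in (F1_word t) (A (2*t+1)) (C l) \<longleftrightarrow> l = 2*t+1 \<or> l = 2*t+2"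
proof -
  let ?v = "[C (2*t+1), B1, C (2*t+2)]"
  let ?v' = "[C 1, B2] @ even_blocks t @ [C (2*t+2), B2]"
  have w: "F1_word t = odd_blocks t @ A (2*t+1) # ?v @ A (2*t+1) # ?v' @ A (2*t+1) # []"
    by (simp add: F1_word_def)
  have "A (2*t+1) \<notin> set (odd_blocks t)" "A (2*t+1) \<notin> set (even_blocks t)"
    by (simp_all add: A_mem_odd_blocks A_mem_even_blocks)
  then have "alternate_in (F1_word t) (A (2*t+1)) (C l) \<longleftrightarrow>
      count_list ?v (C l) = 1 \<and> count_list ?v' (C l) = 1"
    unfolding w using count_list_F1_word_C[OF assms]
    by (intro alternate_in_triple_occurrence) (auto simp: w)
  also have "count_list ?v' (C l) = 1"
    using assms by (simp add: count_list_even_blocks_C count_list_distinct)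
  finally show ?thesis by auto
qed

lemma alternate_in_F1_word_B1_C:
  assumes "l \<in> {1..2*t+2}"
  shows "alternate_in (F1_word t) B1 (C l) \<longleftrightarrow> l \<le> 2*t+1"
proof -
  let ?u = "odd_blocks t @ [A (2*t+1), C (2*t+1)]"
  let ?z = "[C (2*t+2), A (2*t+1), C 1, B2] @ even_blocks t @ [C (2*t+2), B2, A (2*t+1)]"
  have w: "F1_word t = ?u @ B1 # ?z" by (simp add: F1_word_def)
  have "alternate_in (F1_word t) B1 (C l) \<longleftrightarrow> count_list ?u (C l) = 1"
    unfolding w using count_list_F1_word_C[OF assms]
    by (intro alternate_in_single_occurrence)
      (auto simp: w B_not_mem_odd_even_blocks)
  also have "\<dots> \<longleftrightarrow> l \<le> 2*t+1"
    using assms by (simp add: count_list_odd_blocks_C count_list_distinct) arith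
  finally show ?thesis .
qed

lemma alternate_in_F1_word_B2_C:
  assumes "l \<in> {1..2*t+2}"
  shows "alternate_in (F1_word t) B2 (C l) \<longleftrightarrow> 2 \<le> l"
proof -
  let ?u = "odd_blocks t @ [A (2*t+1), C (2*t+1), B1, C (2*t+2), A (2*t+1), C 1]"
  let ?v = "even_blocks t @ [C (2*t+2)]"
  have w: "F1_word t = ?u @ B2 # ?v @ B2 # [A (2*t+1)]" by (simp add: F1_word_def)
  have "alternate_in (F1_word t) B2 (C l) \<longleftrightarrow> count_list ?v (C l) = 1"
    unfolding w using count_list_F1_word_C[OF assms]
    by (intro alternate_in_double_occurrence)
      (auto simp: w B_not_mem_odd_even_blocks)
  also have "\<dots> \<longleftrightarrow> 2 \<le> l"
    using assms by (simp add: count_list_even_blocks_C count_list_distinct) arith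
  finally show ?thesis .
qed

lemma F1_indep_vertex_cases:
  assumes "x \<in> F1_vertices (2*t+3)" "\<not> is_C x"
  obtains (A) i where "x = A i" "i \<in> {1..2*t}" | (top_A) "x = A (2*t+1)" | (B1) "x = B1" | (B2) "x = B2"
proof -
  have "x = B1 \<or> x = B2 \<or> x = A (2*t+1) \<or> (\<exists>i\<in>{1..2*t}. x = A i)"
    using assms by (auto simp: F1_vertices_def le_Suc_eq)
  then show thesis using that by blast
qed

lemma alternate_in_F1_word_indep_C_iff:
  assumes "x \<in> F1_vertices (2*t+3)" "\<not> is_C x" "l \<in> {1..2*t+2}"
  shows "alternate_in (F1_word t) x (C l) \<longleftrightarrow> F1_adj (2*t+3) x (C l)"
  using assms(1,2)
proof (cases rule: F1_indep_vertex_cases)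
  case (A i)
  then show ?thesis using alternate_in_F1_word_A_C[OF _ assms(3)] by simp
next
  case top_A
  then show ?thesis using alternate_in_F1_word_top_A_C[OF assms(3)] by simp
next
  case B1
  then show ?thesis using alternate_in_F1_word_B1_C[OF assms(3)] assms(3) by simp
next
  case B2
  then show ?thesis using alternate_in_F1_word_B2_C[OF assms(3)] assms(3) by simp
qed

lemma not_alternate_in_F1_word_A:
  assumes "i \<in> {1..2*t}" "\<not> is_C y"
  shows "\<not> alternate_in (F1_word t) (A i) y"
proof -
  obtain u z where w: "F1_word t = u @ A i # [C i, C (Suc i)] @ A i # z"
    by (rule F1_word_split_block[OF assms(1)])
  show ?thesis
    unfolding w by (rule not_alternate_in_repeated) (use assms(2) in auto)
qed

lemma not_alternate_in_F1_word_top_A_B1: "\<not> alternate_in (F1_word t) (A (2*t+1)) B1"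
proof -
  have "F1_word t = (odd_blocks t @ [A (2*t+1), C (2*t+1), B1, C (2*t+2)]) @ A (2*t+1) #
      ([C 1, B2] @ even_blocks t @ [C (2*t+2), B2]) @ A (2*t+1) # []"
    by (simp add: F1_word_def)
  then show ?thesis
    by (simp only:) (rule not_alternate_in_repeated; simp add: A_mem_even_blocks B_not_mem_odd_even_blocks)
qed

lemma not_alternate_in_F1_word_top_A_B2: "\<not> alternate_in (F1_word t) (A (2*t+1)) B2"
proof -
  have "F1_word t = odd_blocks t @ A (2*t+1) # [C (2*t+1), B1, C (2*t+2)] @ A (2*t+1) #
      [C 1, B2] @ even_blocks t @ [C (2*t+2), B2, A (2*t+1)]"
    by (simp add: F1_word_def)
  then show ?thesis
    by (simp only:) (rule not_alternate_in_repeated; simp)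
qed

lemma not_alternate_in_F1_word_B2_B1: "\<not> alternate_in (F1_word t) B2 B1"
proof -
  have "F1_word t = (odd_blocks t @ [A (2*t+1), C (2*t+1), B1, C (2*t+2), A (2*t+1), C 1]) @ B2 #
      (even_blocks t @ [C (2*t+2)]) @ B2 # [A (2*t+1)]"
    by (simp add: F1_word_def)
  then show ?thesis
    by (simp only:) (rule not_alternate_in_repeated; simp add: A_mem_even_blocks B_not_mem_odd_even_blocks)
qed

lemma not_alternate_in_F1_word_indep:
  assumes "x \<in> F1_vertices (2*t+3)" "y \<in> F1_vertices (2*t+3)" "\<not> is_C x" "\<not> is_C y" "x \<noteq> y"
  shows "\<not> alternate_in (F1_word t) x y"
proof (cases "\<exists>i\<in>{1..2*t}. x = A i \<or> y = A i")
  case True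
  then show ?thesis
    using assms(3,4) not_alternate_in_F1_word_A alternate_in_commute by metis
next
  case False
  have x: "x \<in> {A (2*t+1), B1, B2}"
    using assms(1,3) False by (cases rule: F1_indep_vertex_cases) auto
  have y: "y \<in> {A (2*t+1), B1, B2}"
    using assms(2,4) False by (cases rule: F1_indep_vertex_cases) auto
  have "\<not> alternate_in (F1_word t) B1 (A (2*t+1))" "\<not> alternate_in (F1_word t) B2 (A (2*t+1))"
    "\<not> alternate_in (F1_word t) B1 B2"
    using not_alternate_in_F1_word_top_A_B1 not_alternate_in_F1_word_top_A_B2
      not_alternate_in_F1_word_B2_B1 alternate_in_commute by metis+
  with x y assms(5) show ?thesis
    using not_alternate_in_F1_word_top_A_B1 not_alternate_in_F1_word_top_A_B2
      not_alternate_in_F1_word_B2_B1 by auto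
qed

lemma set_F1_word: "set (F1_word t) = F1_vertices (2*t+3)"
proof
  show "set (F1_word t) \<subseteq> F1_vertices (2*t+3)"
    by (auto simp: F1_word_def odd_blocks_def even_blocks_def set_blocks F1_vertices_def)
next
  show "F1_vertices (2*t+3) \<subseteq> set (F1_word t)"
  proof
    fix x assume x: "x \<in> F1_vertices (2*t+3)"
    show "x \<in> set (F1_word t)"
    proof (cases "is_C x")
      case True
      with x obtain l where "x = C l" "l \<in> {1..2*t+2}" by (auto simp: F1_vertices_def)
      then have "x \<in> set (filter is_C (F1_word t))" by (simp add: filter_is_C_F1_word)
      then show ?thesis by simp
    next
      case False
      with x show ?thesis
      proof (cases rule: F1_indep_vertex_cases)
        case (A i)
        then obtain u z where "F1_word t = u @ A i # [C i, C (Suc i)] @ A i # z"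
          using F1_word_split_block by blast
        then show ?thesis using A by simp
      qed (auto simp: F1_word_def)
    qed
  qed
qed

lemma F1_adj_commute: "F1_adj k x y = F1_adj k y x"
  by (cases x; cases y) auto

lemma F1_word_represents: "word_represents (F1_word t) (F1_vertices (2*t+3)) (F1_adj (2*t+3))"
  unfolding word_represents_def
proof (intro conjI ballI impI set_F1_word)
  have clique: "F1_adj (2*t+3) x (C l) \<longleftrightarrow> alternate_in (F1_word t) x (C l)"
    if "x \<in> F1_vertices (2*t+3)" "C l \<in> F1_vertices (2*t+3)" "x \<noteq> C l" for x l
  proof (cases "is_C x")
    case True
    with that obtain i where "x = C i" "i \<in> {1..2*t+2}" by (auto simp: F1_vertices_def)
    then show ?thesis using that alternate_in_F1_word_C_C[of i t l] by (auto simp: F1_vertices_def)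
  next
    case False
    then show ?thesis using that alternate_in_F1_word_indep_C_iff[of x t l]
      by (auto simp: F1_vertices_def)
  qed
  fix x y assume xy: "x \<in> F1_vertices (2*t+3)" "y \<in> F1_vertices (2*t+3)" "x \<noteq> y"
  show "F1_adj (2*t+3) x y \<longleftrightarrow> alternate_in (F1_word t) x y"
  proof (cases "is_C y")
    case True
    then obtain l where "y = C l" by (cases y) auto
    then show ?thesis using clique xy by blast
  next
    case y: False
    show ?thesis
    proof (cases "is_C x")
      case True
      then obtain l where "x = C l" by (cases x) auto
      then show ?thesis
        using clique[of y l] xy alternate_in_commute[of _ x y] F1_adj_commute[of _ x y] by auto
    next
      case False
      then have "\<not> F1_adj (2*t+3) x y" using y by (cases x; cases y) auto
      then show ?thesis using not_alternate_in_F1_word_indep xy False y by blast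
    qed
  qed
qed

theorem lemma13:
  fixes k :: nat
  assumes "odd k" and "k \<ge> 5"
  shows "word_representable (F1_vertices k) (F1_adj k)"
proof -
  obtain t where "k = 2*t+3" using assms by (intro that[of "(k - 3) div 2"]) presburger
  then show ?thesis using F1_word_represents word_representable_def by blast
qed

end
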